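(* Let $m\ge2$, $n\ge1$. An $m$-uniform multi-hypergraph $\mathcal{P}=([n],\mathbb{E})$ is a cp multi-hypergraph if and only if it has Property R.
   Context: $S(m,n)=\{(i_1,\dots,i_m): i_k\in[n]\}$. For a tuple or multiset $\eta=\{i_1,\dots,i_m\}$, its base $B(\eta)$ is the set of distinct elements among $i_1,\dots,i_m$, and $M(\eta)$ is the multiset formed by the entries of a tuple $\eta$. An $m$-uniform multi-hypergraph on $[n]$ is a pair $([n],\mathbb{E})$ with $\mathbb{E}$ a set of multisets of elements of $[n]$, each of cardinality $m$ counting repetitions. A symmetric real tensor $\mathcal{A}=(a_{i_1\cdots i_m})$ of order $m$ and dimension $n$ is an associated tensor of $\mathcal{P}$ if for every $(i_1,\dots,i_m)\in S(m,n)$, $a_{i_1\cdots i_m}\neq0$ when the multiset $\{i_1,\dots,i_m\}\in\mathbb{E}$ and $a_{i_1\cdots i_m}=0$ otherwise. For $\mathbf{u}\in\mathbb{R}^n$, $\mathbf{u}^m$ is the tensor with entries $u_{i_1}\cdots u_{i_m}$. A symmetric tensor $\mathcal{A}$ is $\{0,1\}$-cp if $\mathcal{A}=\sum_{j=1}^q\mathbf{u}_j^m$ for some $q\ge1$ and $\mathbf{u}_j\in\{0,1\}^n$ (such a tensor need not have entries in $\{0,1\}$). $\mathcal{P}$ is a cp multi-hypergraph if it has an associated tensor that is $\{0,1\}$-cp. For $\alpha\in\mathbb{E}$, $\mathcal{D}_\alpha=\{\eta\in S(m,n): B(\eta)\subseteq B(\alpha)\}$; $\mathcal{P}$ has Property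 R if for every $\alpha\in\mathbb{E}$ and every $\eta\in\mathcal{D}_\alpha$, the multiset $M(\eta)$ belongs to $\mathbb{E}$. *)

theory Defs
  imports Complex_Main "HOL-Library.Multiset"
begin

definition tuples :: "nat \<Rightarrow> nat \<Rightarrow> nat list set" where
  "tuples m n = {xs. length xs = m \<and> set xs \<subseteq> {1..n}}"

definition uniform_multi_hypergraph :: "nat \<Rightarrow> nat \<Rightarrow> nat multiset set \<Rightarrow> bool" where
  "uniform_multi_hypergraph m n E \<longleftrightarrow>
     (\<forall>e\<in>E. size e = m \<and> set_mset e \<subseteq> {1..n})"

text \<open>A real tensor of order m and dimension n is a function on tuples;
  only its values on S(m,n) are relevant.\<close>

definition symmetric_tensor :: "nat \<Rightarrow> nat \<Rightarrow> (nat list \<Rightarrow> real) \<Rightarrow> bool" where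
  "symmetric_tensor m n A \<longleftrightarrow>
     (\<forall>xs\<in>tuples m n. \<forall>ys\<in>tuples m n. mset xs = mset ys \<longrightarrow> A xs = A ys)"

definition associated_tensor :: "nat \<Rightarrow> nat \<Rightarrow> nat multiset set \<Rightarrow> (nat list \<Rightarrow> real) \<Rightarrow> bool" where
  "associated_tensor m n E A \<longleftrightarrow> symmetric_tensor m n A \<and>
     (\<forall>xs\<in>tuples m n. (A xs \<noteq> 0 \<longleftrightarrow> mset xs \<in> E))"

definition zero_one_cp :: "nat \<Rightarrow> nat \<Rightarrow> (nat list \<Rightarrow> real) \<Rightarrow> bool" where
  "zero_one_cp m n A \<longleftrightarrow> symmetric_tensor m n A \<and>
     (\<exists>q::nat. \<exists>u :: nat \<Rightarrow> nat \<Rightarrow> real. q \<ge> 1 \<and>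
        (\<forall>j<q. \<forall>i\<in>{1..n}. u j i \<in> {0, 1}) \<and>
        (\<forall>xs\<in>tuples m n. A xs = (\<Sum>j<q. \<Prod>k<m. u j (xs ! k))))"

definition cp_multi_hypergraph :: "nat \<Rightarrow> nat \<Rightarrow> nat multiset set \<Rightarrow> bool" where
  "cp_multi_hypergraph m n E \<longleftrightarrow>
     (\<exists>A. associated_tensor m n E A \<and> zero_one_cp m n A)"

definition property_R :: "nat \<Rightarrow> nat \<Rightarrow> nat multiset set \<Rightarrow> bool" where
  "property_R m n E \<longleftrightarrow>
     (\<forall>\<alpha>\<in>E. \<forall>\<eta>\<in>tuples m n. set \<eta> \<subseteq> set_mset \<alpha> \<longrightarrow> mset \<eta> \<in> E)"

end

theory Submission
  imports Defs
begin

text \<open>Write a \<open>{0,1}\<close>-cp tensor as \<open>A = \<Sum>\<^sub>j u\<^sub>j\<^sup>m\<close> with \<open>u\<^sub>j\<close> the indicator vector of a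
  set \<open>S\<^sub>j\<close>. The entry of \<open>u\<^sub>j\<^sup>m\<close> at a tuple \<open>\<eta>\<close> is \<open>1\<close> if \<open>B(\<eta>) \<subseteq> S\<^sub>j\<close> and \<open>0\<close> otherwise, so,
  all terms being nonnegative, \<open>A\<^sub>\<eta> \<noteq> 0\<close> iff \<open>B(\<eta>)\<close> lies in some \<open>S\<^sub>j\<close>. Hence the support of
  \<open>A\<close> is closed under passing to tuples with a smaller base, which for an associated tensor
  is Property R. Conversely, under Property R the tensor with one term \<open>u\<^sub>j\<^sup>m\<close> for each base
  \<open>B(\<alpha>)\<close> of an edge \<open>\<alpha>\<close> is associated with the hypergraph.\<close>

definition power_sum_tensor :: "nat \<Rightarrow> (nat \<Rightarrow> nat \<Rightarrow> real) \<Rightarrow> nat \<Rightarrow> nat list \<Rightarrow> real" where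
  "power_sum_tensor q u m xs = (\<Sum>j<q. \<Prod>k<m. u j (xs ! k))"

lemma prod_nth_eq_prod_mset:
  "(\<Prod>k<length xs. f (xs ! k)) = prod_mset (image_mset f (mset xs))"
  by (simp add: prod_mset_prod_list prod.list_conv_set_nth atLeast0LessThan flip: mset_map)

lemma symmetric_power_sum_tensor: "symmetric_tensor m n (power_sum_tensor q u m)"
  unfolding symmetric_tensor_def power_sum_tensor_def tuples_def
  by (auto intro!: sum.cong) (metis prod_nth_eq_prod_mset)

lemma prod_nth_zero_one:
  fixes u :: "nat \<Rightarrow> real"
  assumes "\<And>i. i \<in> set xs \<Longrightarrow> u i \<in> {0, 1}"
  shows "(\<Prod>k<length xs. u (xs ! k)) = of_bool (set xs \<subseteq> {i. u i = 1})"
proof (cases "set xs \<subseteq> {i. u i = 1}")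
  case True
  then show ?thesis by (auto intro!: prod.neutral simp: subset_iff in_set_conv_nth)
next
  case False
  then obtain k where "k < length xs" "u (xs ! k) \<noteq> 1"
    by (auto simp: subset_iff in_set_conv_nth)
  then have "u (xs ! k) = 0" using assms nth_mem by blast
  with \<open>k < length xs\<close> False show ?thesis by (intro trans[OF prod_zero]) auto
qed

lemma power_sum_tensor_neq_0_iff:
  assumes u: "\<forall>j<q. \<forall>i\<in>{1..n}. u j i \<in> {0, 1}" and xs: "xs \<in> tuples m n"
  shows "power_sum_tensor q u m xs \<noteq> 0 \<longleftrightarrow> (\<exists>j<q. set xs \<subseteq> {i. u j i = 1})"
proof -
  have "(\<Prod>k<m. u j (xs ! k)) = of_bool (set xs \<subseteq> {i. u j i = 1})" if "j < q" for j
  proof -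
    have "length xs = m" "set xs \<subseteq> {1..n}" using xs unfolding tuples_def by auto
    with u that show ?thesis using prod_nth_zero_one[of xs "u j"] by blast
  qed
  then have "power_sum_tensor q u m xs = (\<Sum>j<q. of_bool (set xs \<subseteq> {i. u j i = 1}))"
    unfolding power_sum_tensor_def by simp
  then show ?thesis by (simp add: sum_nonneg_eq_0_iff del: sum_of_bool_eq) blast
qed

lemma zero_one_cp_support_downward_closed:
  assumes "zero_one_cp m n A" "xs \<in> tuples m n" "ys \<in> tuples m n"
    and "A xs \<noteq> 0" "set ys \<subseteq> set xs"
  shows "A ys \<noteq> 0"
proof -
  obtain q u where u: "\<forall>j<q. \<forall>i\<in>{1..n}. u j i \<in> {0, 1}"
    and A: "\<forall>xs\<in>tuples m n. A xs = power_sum_tensor q u m xs"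
    using assms(1) unfolding zero_one_cp_def power_sum_tensor_def by blast
  show ?thesis
    using assms(2-) A power_sum_tensor_neq_0_iff[OF u] by (metis subset_trans)
qed

lemma obtain_tuple_with_mset:
  assumes "size e = m" "set_mset e \<subseteq> {1..n}"
  obtains xs where "xs \<in> tuples m n" "mset xs = e"
proof -
  let ?xs = "sorted_list_of_multiset e"
  have "mset ?xs = e" by simp
  then have "?xs \<in> tuples m n"
    using assms size_mset[of ?xs] set_mset_mset[of ?xs] unfolding tuples_def by simp
  then show thesis using that \<open>mset ?xs = e\<close> by blast
qed

lemma property_R_if_cp_multi_hypergraph:
  assumes "uniform_multi_hypergraph m n E" "cp_multi_hypergraph m n E"
  shows "property_R m n E"
  unfolding property_R_def
proof (intro ballI impI)
  fix \<alpha> \<eta> assume "\<alpha> \<in> E" "\<eta> \<in> tuples m n" "set \<eta> \<subseteq> set_mset \<alpha>"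
  obtain A where A: "associated_tensor m n E A" "zero_one_cp m n A"
    using assms(2) unfolding cp_multi_hypergraph_def by blast
  obtain xs where xs: "xs \<in> tuples m n" "mset xs = \<alpha>"
    using obtain_tuple_with_mset assms(1) \<open>\<alpha> \<in> E\<close> unfolding uniform_multi_hypergraph_def by metis
  have "A xs \<noteq> 0" using A(1) xs \<open>\<alpha> \<in> E\<close> unfolding associated_tensor_def by auto
  then have "A \<eta> \<noteq> 0"
    using zero_one_cp_support_downward_closed[OF A(2) xs(1) \<open>\<eta> \<in> tuples m n\<close>]
      \<open>set \<eta> \<subseteq> set_mset \<alpha>\<close> xs(2) by auto
  then show "mset \<eta> \<in> E" using A(1) \<open>\<eta> \<in> tuples m n\<close> unfolding associated_tensor_def by auto
qed

lemma cp_multi_hypergraph_if_property_R: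
  assumes "m \<ge> 1" "uniform_multi_hypergraph m n E" "property_R m n E"
  shows "cp_multi_hypergraph m n E"
proof -
  have "set_mset ` E \<subseteq> Pow {1..n}"
    using assms(2) unfolding uniform_multi_hypergraph_def by blast
  then have "finite (insert {} (set_mset ` E))"
    by (meson finite_Pow_iff finite_atLeastAtMost finite_insert finite_subset)
  text \<open>The empty set is added only to make \<open>q \<ge> 1\<close> when \<open>E = {}\<close>; no tuple of length
    \<open>m \<ge> 1\<close> has an empty base.\<close>
  obtain L where L: "set L = insert {} (set_mset ` E)"
    using finite_list[OF \<open>finite _\<close>] by blast
  define u :: "nat \<Rightarrow> nat \<Rightarrow> real" where "u j i = of_bool (i \<in> L ! j)" for j i
  define A where "A = power_sum_tensor (length L) u m"
  have u01: "\<forall>j<length L. \<forall>i\<in>{1..n}. u j i \<in> {0, 1}" by (simp add: u_def)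
  have supp_u: "{i. u j i = 1} = L ! j" for j by (simp add: u_def)
  have supp_A: "A xs \<noteq> 0 \<longleftrightarrow> mset xs \<in> E" if xs: "xs \<in> tuples m n" for xs
  proof -
    have "xs \<noteq> []" using xs assms(1) unfolding tuples_def by auto
    have "A xs \<noteq> 0 \<longleftrightarrow> (\<exists>S\<in>set L. set xs \<subseteq> S)"
      unfolding A_def power_sum_tensor_neq_0_iff[OF u01 xs] supp_u by (metis in_set_conv_nth)
    also have "\<dots> \<longleftrightarrow> (\<exists>\<alpha>\<in>E. set xs \<subseteq> set_mset \<alpha>)"
      using \<open>xs \<noteq> []\<close> by (simp add: L)
    also have "\<dots> \<longleftrightarrow> mset xs \<in> E"
      using assms(3) xs unfolding property_R_def by (metis set_mset_mset order_refl)
    finally show ?thesis .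
  qed
  have "length L \<ge> 1" using L by (cases L) auto
  have "associated_tensor m n E A"
    unfolding associated_tensor_def using symmetric_power_sum_tensor supp_A by (simp add: A_def)
  moreover have "zero_one_cp m n A"
    unfolding zero_one_cp_def A_def power_sum_tensor_def
    using \<open>length L \<ge> 1\<close> u01 symmetric_power_sum_tensor[unfolded power_sum_tensor_def] by blast
  ultimately show ?thesis unfolding cp_multi_hypergraph_def by blast
qed

theorem mainTheorem6:
  fixes m n :: nat and E :: "nat multiset set"
  assumes "m \<ge> 2" and "n \<ge> 1" and "uniform_multi_hypergraph m n E"
  shows "cp_multi_hypergraph m n E \<longleftrightarrow> property_R m n E"
proof
  show "property_R m n E" if "cp_multi_hypergraph m n E"
    using property_R_if_cp_multi_hypergraph[OF assms(3) that] .
  show "cp_multi_hypergraph m n E" if "property_R m n E"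
    using cp_multi_hypergraph_if_property_R[OF _ assms(3) that] \<open>m \<ge> 2\<close> by simp
qed

end
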